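(* Consider the single-element, single-slab periodic space-time SBP scheme: unknowns $\boldsymbol\rho,\boldsymbol g_1,\dots,\boldsymbol g_{n_v}\in\mathbb R^{(n_t+1)(n_x+1)}$ satisfying $$\mathsf D_t\boldsymbol\rho+\tilde{\mathsf D}_x\langle v\boldsymbol g\rangle=-\sigma_a\boldsymbol\rho-\mathsf H_t^{-1}\mathsf t_B\mathsf t_B^\top(\boldsymbol\rho-\boldsymbol\rho(0)),$$ $$\mathsf D_t\boldsymbol g_k+\tfrac{v_k}{\varepsilon}\tilde{\mathsf D}_x\boldsymbol g_k-\tfrac1\varepsilon\langle v\tilde{\mathsf D}_x\boldsymbol g\rangle+\tfrac{v_k}{\varepsilon^2}\tilde{\mathsf D}_x\boldsymbol\rho=-\Big(\tfrac{\sigma_s}{\varepsilon^2}+\sigma_a\Big)\boldsymbol g_k-\mathsf H_t^{-1}\mathsf t_B\mathsf t_B^\top(\boldsymbol g_k-\boldsymbol g_k(0)),\quad k=1,\dots,n_v,$$ where the initial data satisfy $\langle\boldsymbol g(0)\rangle=0$. Then every solution satisfies $\langle\boldsymbol g\rangle=\sum_{k=1}^{n_v}\omega_k\boldsymbol g_k=0$.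
   Context: SBP operators: on nodes $x_0<\dots<x_n$, a matrix $\bar{\mathsf D}$ is a degree-$p$ SBP approximation of $d/dx$ if $\bar{\mathsf D}\boldsymbol x^k=k\boldsymbol x^{k-1}$ for $0\le k\le p$ (with $\boldsymbol x^k$ the vector of $x_i^k$), $\bar{\mathsf D}=\bar{\mathsf H}^{-1}\bar{\mathsf Q}$ with $\bar{\mathsf H}$ symmetric positive definite (here always diagonal), and $\bar{\mathsf Q}+\bar{\mathsf Q}^\top=\bar{\mathsf E}=\bar{\boldsymbol t}_R\bar{\boldsymbol t}_R^\top-\bar{\boldsymbol t}_L\bar{\boldsymbol t}_L^\top=\mathrm{diag}(-1,0,\dots,0,1)$, $\bar{\boldsymbol t}_L=(1,0,\dots,0)^\top$, $\bar{\boldsymbol t}_R=(0,\dots,0,1)^\top$. Let $\bar{\mathsf D}_x=\bar{\mathsf H}_x^{-1}\bar{\mathsf Q}_x$ be such an operator on $n_x+1$ spatial nodes (boundary vectors $\bar{\boldsymbol t}_L,\bar{\boldsymbol t}_R$) and $\bar{\mathsf D}_t=\bar{\mathsf H}_t^{-1}\bar{\mathsf Q}_t$ one on $n_t+1$ temporal nodes, with boundary vectors $\bar{\boldsymbol t}_B=(1,0,\dots,0)^\top$, $\bar{\boldsymbol t}_T=(0,\dots,0,1)^\top$. With $\mathsf I_{n_x},\mathsf I_{n_t}$ identities of size $n_x+1,n_t+1$: $\mathsf D_t=\bar{\mathsf D}_t\otimes\mathsf I_{n_x}$, $\mathsf D_x=\mathsf I_{n_t}\otimes\bar{\mathsf D}_x$,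 $\mathsf H=\bar{\mathsf H}_t\otimes\bar{\mathsf H}_x$, $\mathsf Q_t=\bar{\mathsf Q}_t\otimes\bar{\mathsf H}_x$, $\mathsf H_t=\bar{\mathsf H}_t\otimes\mathsf I_{n_x}$, $\mathsf H_x=\mathsf I_{n_t}\otimes\bar{\mathsf H}_x$, $\mathsf t_R=\mathsf I_{n_t}\otimes\bar{\boldsymbol t}_R$, $\mathsf t_L=\mathsf I_{n_t}\otimes\bar{\boldsymbol t}_L$, $\mathsf t_B=\bar{\boldsymbol t}_B\otimes\mathsf I_{n_x}$, $\mathsf t_T=\bar{\boldsymbol t}_T\otimes\mathsf I_{n_x}$. The periodic operator is $\tilde{\mathsf D}_x=\mathsf D_x-\frac12\mathsf H_x^{-1}\big(\mathsf t_R(\mathsf t_R^\top-\mathsf t_L^\top)-\mathsf t_L(\mathsf t_L^\top-\mathsf t_R^\top)\big)$. Velocity discretization: nodes $v_1,\dots,v_{n_v}$ and weights $\omega_k$ with $\sum_k\omega_k=1$ and $\sum_k\omega_kv_k=0$; for vectors indexed by $k$, $\langle\boldsymbol a\rangle=\sum_k\omega_k\boldsymbol a_k$ (e.g. $\langle v\boldsymbol g\rangle=\sum_k\omega_kv_k\boldsymbol g_k$, $\langle v\tilde{\mathsf D}_x\boldsymbol g\rangle=\sum_k\omega_kv_k\tilde{\mathsf D}_x\boldsymbol g_k$). Parameters: $\varepsilon>0$, $\sigma_s>0$, $\sigma_a\ge0$. $\boldsymbol\rho(0),\boldsymbol g_k(0)$ are given vectors representing the initial data. *)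

theory Defs
  imports Main "HOL.Real"
begin

text \<open>A matrix on n+1 nodes is a function nat \<Rightarrow> nat \<Rightarrow> real, only the
entries with indices 0..n are relevant. A space-time vector in R^((n_t+1)(n_x+1)) is a
function on pairs (i,j) with i \<le> n_t (time node) and j \<le> n_x (space node); the pair
(i,j) corresponds to position i*(n_x+1)+j of the Kronecker ordering used in the paper
(time outer, space inner).\<close>

type_synonym mat = "nat \<Rightarrow> nat \<Rightarrow> real"
type_synonym stvec = "nat \<times> nat \<Rightarrow> real"

text \<open>E = t_R t_R^T - t_L t_L^T on n+1 nodes, t_L = e_0, t_R = e_n.\<close>
definition Ebd :: "nat \<Rightarrow> mat" where
  "Ebd n i j = (if i = n \<and> j = n then 1 else 0) - (if i = 0 \<and> j = 0 then 1 else 0)"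

definition is_SBP :: "nat \<Rightarrow> (nat \<Rightarrow> real) \<Rightarrow> nat \<Rightarrow> mat \<Rightarrow> mat \<Rightarrow> mat \<Rightarrow> bool" where
  "is_SBP n x p D H Q \<longleftrightarrow>
     (\<forall>i<n. x i < x (Suc i)) \<and>
     (\<forall>i\<le>n. \<forall>j\<le>n. i \<noteq> j \<longrightarrow> H i j = 0) \<and>
     (\<forall>i\<le>n. H i i > 0) \<and>
     (\<forall>i\<le>n. \<forall>j\<le>n. D i j = Q i j / H i i) \<and>
     (\<forall>i\<le>n. \<forall>j\<le>n. Q i j + Q j i = Ebd n i j) \<and>
     (\<forall>k\<le>p. \<forall>i\<le>n. (\<Sum>j\<le>n. D i j * x j ^ k) = real k * x i ^ (k - 1))"

definition Dt_op :: "nat \<Rightarrow> mat \<Rightarrow> stvec \<Rightarrow> stvec" where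
  "Dt_op nt Dtb u = (\<lambda>(i,j). \<Sum>i'\<le>nt. Dtb i i' * u (i',j))"

definition Dx_op :: "nat \<Rightarrow> mat \<Rightarrow> stvec \<Rightarrow> stvec" where
  "Dx_op nx Dxb u = (\<lambda>(i,j). \<Sum>j'\<le>nx. Dxb j j' * u (i,j'))"

text \<open>Periodic operator
  Dtilde_x = D_x - 1/2 H_x^{-1} (t_R (t_R^T - t_L^T) - t_L (t_L^T - t_R^T)),
  with H_x = I \<otimes> Hbar_x (diagonal), t_R = I \<otimes> e_{n_x}, t_L = I \<otimes> e_0.\<close>
definition Dxper_op :: "nat \<Rightarrow> mat \<Rightarrow> mat \<Rightarrow> stvec \<Rightarrow> stvec" where
  "Dxper_op nx Dxb Hxb u = (\<lambda>(i,j). Dx_op nx Dxb u (i,j)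
      - (1/2) * (1 / Hxb j j) *
        ((if j = nx then u (i,nx) - u (i,0) else 0)
         - (if j = 0 then u (i,0) - u (i,nx) else 0)))"

text \<open>SAT term H_t^{-1} t_B t_B^T w with H_t = Hbar_t \<otimes> I, t_B = e_0 \<otimes> I.\<close>
definition SATB_op :: "mat \<Rightarrow> stvec \<Rightarrow> stvec" where
  "SATB_op Htb w = (\<lambda>(i,j). if i = 0 then w (0,j) / Htb 0 0 else 0)"

end

theory Submission
  imports Defs
begin

text \<open>Averaging the kinetic equations with the weights \<omega>: since \<Sum>\<omega> = 1 and \<Sum>\<omega> v = 0, the
transport terms and their \<open>1/\<epsilon>\<close> correction cancel, the \<rho>-coupling vanishes, and the SAT
data drop out because \<open>\<langle>g(0)\<rangle> = 0\<close>. On every spatial node the time column y of \<open>\<langle>g\<rangle>\<close> thus solves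
\<open>D y + c y + H\<^sup>-\<^sup>1 e\<^sub>0 e\<^sub>0\<^sup>T y = 0\<close> with \<open>c = \<sigma>s/\<epsilon>\<^sup>2 + \<sigma>a > 0\<close>. Testing with H y and using
\<open>Q + Q\<^sup>T = E\<close> gives the energy identity \<open>(y\<^sub>n\<^sup>2 + y\<^sub>0\<^sup>2)/2 + c y\<^sup>T H y = 0\<close>, so y = 0.\<close>

lemma sum_Ebd_quadratic_form:
  "(\<Sum>i\<le>n. \<Sum>j\<le>n. Ebd n i j * y i * y j) = (y n)\<^sup>2 - (y 0)\<^sup>2"
proof -
  have "(\<Sum>j\<le>n. Ebd n i j * y i * y j)
      = (if i = n then (y n)\<^sup>2 else 0) - (if i = 0 then (y 0)\<^sup>2 else 0)" for i
    by (simp add: Ebd_def left_diff_distrib sum_subtractf power2_eq_square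
        if_distrib[of "\<lambda>a. a * _"] cong: if_cong)
  then show ?thesis
    by (simp add: sum_subtractf)
qed

lemma quadratic_form_eq_boundary_terms:
  fixes Q :: mat and y :: "nat \<Rightarrow> real"
  assumes "\<forall>i\<le>n. \<forall>j\<le>n. Q i j + Q j i = Ebd n i j"
  shows "(\<Sum>i\<le>n. \<Sum>j\<le>n. Q i j * y i * y j) = ((y n)\<^sup>2 - (y 0)\<^sup>2) / 2"
proof -
  have "(\<Sum>i\<le>n. \<Sum>j\<le>n. Q i j * y i * y j) = (\<Sum>i\<le>n. \<Sum>j\<le>n. Q j i * y i * y j)"
    by (subst sum.swap) (simp add: ac_simps)
  then have "2 * (\<Sum>i\<le>n. \<Sum>j\<le>n. Q i j * y i * y j)
      = (\<Sum>i\<le>n. \<Sum>j\<le>n. (Q i j + Q j i) * y i * y j)"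
    by (simp add: distrib_right sum.distrib)
  also have "\<dots> = (\<Sum>i\<le>n. \<Sum>j\<le>n. Ebd n i j * y i * y j)"
    using assms by (intro sum.cong) auto
  finally show ?thesis
    by (simp add: sum_Ebd_quadratic_form)
qed

lemma is_SBP_energy_identity:
  fixes y :: "nat \<Rightarrow> real"
  assumes "is_SBP n x p D H Q"
  shows "(\<Sum>i\<le>n. H i i * y i * (\<Sum>j\<le>n. D i j * y j)) = ((y n)\<^sup>2 - (y 0)\<^sup>2) / 2"
proof -
  have H_pos: "\<forall>i\<le>n. H i i > 0"
    and D_eq: "\<forall>i\<le>n. \<forall>j\<le>n. D i j = Q i j / H i i"
    and Q_skew: "\<forall>i\<le>n. \<forall>j\<le>n. Q i j + Q j i = Ebd n i j"
    using assms unfolding is_SBP_def by blast+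
  have "H i i * y i * (\<Sum>j\<le>n. D i j * y j) = (\<Sum>j\<le>n. Q i j * y i * y j)" if "i \<le> n" for i
    using that H_pos D_eq by (auto simp: sum_distrib_left intro!: sum.cong)
  then show ?thesis
    using quadratic_form_eq_boundary_terms[OF Q_skew] by simp
qed

lemma is_SBP_damped_SAT_solution_eq_0:
  fixes y :: "nat \<Rightarrow> real"
  assumes sbp: "is_SBP n x p D H Q" and c: "c > 0"
    and eq: "\<forall>i\<le>n. (\<Sum>j\<le>n. D i j * y j) + c * y i + (if i = 0 then y 0 / H 0 0 else 0) = 0"
    and i: "i \<le> n"
  shows "y i = 0"
proof -
  have H_pos: "\<forall>i\<le>n. H i i > 0"
    using sbp unfolding is_SBP_def by blast
  define energy where "energy = (\<Sum>i\<le>n. H i i * (y i)\<^sup>2)"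
  have "0 = (\<Sum>i\<le>n. H i i * y i * ((\<Sum>j\<le>n. D i j * y j) + c * y i + (if i = 0 then y 0 / H 0 0 else 0)))"
    using eq by simp
  also have "\<dots> = (\<Sum>i\<le>n. H i i * y i * (\<Sum>j\<le>n. D i j * y j)) + c * energy
      + (\<Sum>i\<le>n. H i i * y i * (if i = 0 then y 0 / H 0 0 else 0))"
    by (simp add: energy_def distrib_left sum.distrib sum_distrib_left power2_eq_square ac_simps)
  also have "(\<Sum>i\<le>n. H i i * y i * (if i = 0 then y 0 / H 0 0 else 0)) = (y 0)\<^sup>2"
    using H_pos[rule_format, of 0]
    by (simp add: if_distrib[of "\<lambda>a. _ * a"] power2_eq_square cong: if_cong)
  finally have energy_eq: "c * energy = - ((y n)\<^sup>2 + (y 0)\<^sup>2) / 2"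
    using is_SBP_energy_identity[OF sbp, of y] by (simp add: field_simps)
  have terms_nonneg: "H i i * (y i)\<^sup>2 \<ge> 0" if "i \<le> n" for i
    using H_pos that by (metis less_imp_le mult_nonneg_nonneg zero_le_power2)
  have "energy \<ge> 0"
    unfolding energy_def using terms_nonneg by (intro sum_nonneg) simp
  moreover have "c * energy \<le> 0"
    unfolding energy_eq by simp
  ultimately have "energy = 0"
    using c by (simp add: mult_le_0_iff)
  then have "H i i * (y i)\<^sup>2 = 0"
    using sum_nonneg_eq_0_iff[of "{..n}" "\<lambda>i. H i i * (y i)\<^sup>2"] terms_nonneg i
    unfolding energy_def by simp
  then show ?thesis
    using H_pos i by fastforce
qed

lemma weighted_sum_Dt_op:
  "(\<Sum>k\<in>K. w k * Dt_op nt D (u k) q) = Dt_op nt D (\<lambda>p. \<Sum>k\<in>K. w k * u k p) q"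
  by (cases q) (simp add: Dt_op_def sum_distrib_left ac_simps sum.swap[of _ K])

lemma weighted_sum_SATB_op:
  "(\<Sum>k\<in>K. w k * SATB_op H (u k) q) = SATB_op H (\<lambda>p. \<Sum>k\<in>K. w k * u k p) q"
  by (cases q) (simp add: SATB_op_def sum_divide_distrib)

lemma weighted_mean_of_kinetic_equations:
  fixes \<omega> v A B T g :: "nat \<Rightarrow> real"
  assumes "(\<Sum>k\<in>K. \<omega> k) = 1" and "(\<Sum>k\<in>K. \<omega> k * v k) = 0"
    and "\<forall>k\<in>K. A k + v k / \<epsilon> * B k - 1 / \<epsilon> * (\<Sum>l\<in>K. \<omega> l * v l * B l) + v k / \<epsilon>\<^sup>2 * R
      = - c * g k - T k"
  shows "(\<Sum>k\<in>K. \<omega> k * A k) + c * (\<Sum>k\<in>K. \<omega> k * g k) + (\<Sum>k\<in>K. \<omega> k * T k) = 0"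
proof -
  define S where "S = (\<Sum>l\<in>K. \<omega> l * v l * B l)"
  have "(\<Sum>k\<in>K. \<omega> k * (A k + c * g k + T k))
      = (\<Sum>k\<in>K. S / \<epsilon> * \<omega> k - 1 / \<epsilon> * (\<omega> k * v k * B k) - R / \<epsilon>\<^sup>2 * (\<omega> k * v k))"
  proof (rule sum.cong)
    fix k assume "k \<in> K"
    then have "A k + c * g k + T k = S / \<epsilon> - v k / \<epsilon> * B k - v k / \<epsilon>\<^sup>2 * R"
      using assms(3) unfolding S_def by (simp add: algebra_simps)
    then have "\<omega> k * (A k + c * g k + T k) = \<omega> k * (S / \<epsilon> - v k / \<epsilon> * B k - v k / \<epsilon>\<^sup>2 * R)"
      by (simp only:)
    also have "\<dots> = S / \<epsilon> * \<omega> k - 1 / \<epsilon> * (\<omega> k * v k * B k) - R / \<epsilon>\<^sup>2 * (\<omega> k * v k)"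
      by (simp add: algebra_simps)
    finally show "\<omega> k * (A k + c * g k + T k)
        = S / \<epsilon> * \<omega> k - 1 / \<epsilon> * (\<omega> k * v k * B k) - R / \<epsilon>\<^sup>2 * (\<omega> k * v k)" .
  qed simp
  also have "\<dots> = S / \<epsilon> * (\<Sum>k\<in>K. \<omega> k) - 1 / \<epsilon> * S - R / \<epsilon>\<^sup>2 * (\<Sum>k\<in>K. \<omega> k * v k)"
    by (simp add: sum_subtractf sum_distrib_left S_def)
  also have "\<dots> = 0"
    using assms(1,2) by simp
  finally show ?thesis
    by (simp add: sum.distrib sum_distrib_left algebra_simps)
qed

theorem theorem3p2:
  fixes nx nt px pt nv :: nat
    and xs ts :: "nat \<Rightarrow> real"
    and Dxb Hxb Qxb Dtb Htb Qtb :: mat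
    and v \<omega> :: "nat \<Rightarrow> real"
    and \<epsilon> \<sigma>s \<sigma>a :: real
    and \<rho> \<rho>0 :: stvec
    and g g0 :: "nat \<Rightarrow> stvec"
  assumes sbp_x: "is_SBP nx xs px Dxb Hxb Qxb"
    and sbp_t: "is_SBP nt ts pt Dtb Htb Qtb"
    and w_sum: "(\<Sum>k=1..nv. \<omega> k) = 1"
    and w_mom: "(\<Sum>k=1..nv. \<omega> k * v k) = 0"
    and eps: "\<epsilon> > 0" and sig_s: "\<sigma>s > 0" and sig_a: "\<sigma>a \<ge> 0"
    and init: "\<forall>i\<le>nt. \<forall>j\<le>nx. (\<Sum>k=1..nv. \<omega> k * g0 k (i,j)) = 0"
    and eq_rho: "\<forall>i\<le>nt. \<forall>j\<le>nx.
        Dt_op nt Dtb \<rho> (i,j)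
        + Dxper_op nx Dxb Hxb (\<lambda>p. \<Sum>k=1..nv. \<omega> k * v k * g k p) (i,j)
        = - \<sigma>a * \<rho> (i,j) - SATB_op Htb (\<lambda>p. \<rho> p - \<rho>0 p) (i,j)"
    and eq_g: "\<forall>k\<in>{1..nv}. \<forall>i\<le>nt. \<forall>j\<le>nx.
        Dt_op nt Dtb (g k) (i,j)
        + v k / \<epsilon> * Dxper_op nx Dxb Hxb (g k) (i,j)
        - 1 / \<epsilon> * (\<Sum>l=1..nv. \<omega> l * v l * Dxper_op nx Dxb Hxb (g l) (i,j))
        + v k / \<epsilon>\<^sup>2 * Dxper_op nx Dxb Hxb \<rho> (i,j)
        = - (\<sigma>s / \<epsilon>\<^sup>2 + \<sigma>a) * g k (i,j)
          - SATB_op Htb (\<lambda>p. g k p - g0 k p) (i,j)"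
  shows "\<forall>i\<le>nt. \<forall>j\<le>nx. (\<Sum>k=1..nv. \<omega> k * g k (i,j)) = 0"
proof (intro allI impI)
  fix i j assume i: "i \<le> nt" and j: "j \<le> nx"
  define G where "G p = (\<Sum>k=1..nv. \<omega> k * g k p)" for p
  define c where "c = \<sigma>s / \<epsilon>\<^sup>2 + \<sigma>a"
  have c_pos: "c > 0"
    using eps sig_s sig_a unfolding c_def by (simp add: add_pos_nonneg)
  have column: "(\<Sum>i''\<le>nt. Dtb i' i'' * G (i'', j)) + c * G (i', j)
      + (if i' = 0 then G (0, j) / Htb 0 0 else 0) = 0" if i': "i' \<le> nt" for i'
  proof -
    have "(\<Sum>k=1..nv. \<omega> k * Dt_op nt Dtb (g k) (i', j)) + c * G (i', j)
        + (\<Sum>k=1..nv. \<omega> k * SATB_op Htb (\<lambda>p. g k p - g0 k p) (i', j)) = 0"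
      unfolding G_def c_def
      by (rule weighted_mean_of_kinetic_equations[OF w_sum w_mom,
            where B = "\<lambda>k. Dxper_op nx Dxb Hxb (g k) (i', j)" and R = "Dxper_op nx Dxb Hxb \<rho> (i', j)"])
        (use eq_g i' j in blast)
    moreover have "(\<Sum>k=1..nv. \<omega> k * SATB_op Htb (\<lambda>p. g k p - g0 k p) (i', j))
        = (if i' = 0 then G (0, j) / Htb 0 0 else 0)"
      unfolding weighted_sum_SATB_op using init j
      by (simp add: SATB_op_def G_def sum_subtractf right_diff_distrib)
    ultimately show ?thesis
      unfolding weighted_sum_Dt_op by (simp add: Dt_op_def G_def)
  qed
  show "(\<Sum>k=1..nv. \<omega> k * g k (i, j)) = 0"
    using is_SBP_damped_SAT_solution_eq_0[OF sbp_t c_pos _ i, of "\<lambda>i'. G (i', j)"] column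
    unfolding G_def by simp
qed

end
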